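(* If the number $\log\Gamma(y) + \log\Gamma(1-y)$ is algebraic for some rational number $y$ with $0<y<1$, then the number $\pi \cdot e$ is transcendental.
   Context: $\Gamma$ is Euler's gamma function, $\Gamma(x) = \int_0^\infty e^{-t} t^{x-1}\,dt$ for $x>0$; $\log$ is the natural logarithm and $e$ is Euler's number. A real number is transcendental if it is not algebraic over $\mathbb{Q}$. *)

theory Defs
  imports "HOL-Analysis.Analysis" "HOL-Computational_Algebra.Polynomial"
begin

end

theory Submission
  imports Defs "HOL-Computational_Algebra.Formal_Power_Series"
    "HOL-Computational_Algebra.Fundamental_Theorem_Algebra"
    "HOL-Library.Poly_Mapping" "HOL-Computational_Algebra.Primes"
begin

text \<open>
  By the reflection formula, \<open>a = ln \<Gamma>(y) + ln \<Gamma>(1 - y)\<close> satisfies \<open>e\<^sup>a = \<pi> / sin (\<pi> y)\<close>,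
  where \<open>sin (\<pi> y)\<close> is algebraic (it is a polynomial expression in a root of unity) and
  \<open>a \<ge> ln \<pi> > 0\<close>. Hence \<open>\<pi> e = sin (\<pi> y) \<cdot> e\<^sup>a\<^sup>+\<^sup>1\<close>, and \<open>e\<^sup>a\<^sup>+\<^sup>1\<close> is transcendental by
  the Hermite--Lindemann theorem.

  Hermite--Lindemann is proved by Hermite's method, carried out in the integral group ring
  \<open>\<int>[\<complex>]\<close>. If \<open>\<alpha> \<noteq> 0\<close> and \<open>e\<^sup>\<alpha>\<close> are algebraic, say \<open>M(e\<^sup>\<alpha>) = 0\<close>, then multiplying
  \<open>M([\<alpha>\<^sub>i])\<close> over all conjugates \<open>\<alpha>\<^sub>i\<close> of \<open>\<alpha>\<close> gives an element \<open>c\<close> annihilated by the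
  character \<open>exp\<close>, nonzero since another character \<open>v \<mapsto> e\<^sup>t\<^sup>v\<close> does not kill it, and with
  integral power sums by Newton's identities. Then \<open>\<Theta> = c \<cdot> c\<^sup>*\<close> (with \<open>c\<^sup>*\<close> the reflection
  \<open>[v] \<mapsto> [-v]\<close>) has nonzero coefficient at \<open>[0]\<close>. Evaluating Hermite's auxiliary function
  \<open>F = \<Sum>\<^sub>j f\<^sup>(\<^sup>j\<^sup>)\<close> with \<open>f(x) = (dx)\<^sup>p\<^sup>-\<^sup>1 G(dx)\<^sup>p / (p-1)!\<close> against \<open>\<Theta>\<close> gives an integer
  that is nonzero modulo a large prime \<open>p\<close> but tends to \<open>0\<close>.
\<close>

section \<open>Newton's identities\<close>

fun esym :: "nat \<Rightarrow> 'a::comm_ring_1 list \<Rightarrow> 'a" where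
  "esym 0 xs = 1"
| "esym (Suc m) [] = 0"
| "esym (Suc m) (x # xs) = esym (Suc m) xs + x * esym m xs"

definition psum :: "nat \<Rightarrow> 'a::comm_ring_1 list \<Rightarrow> 'a" where
  "psum i xs = (\<Sum>x\<leftarrow>xs. x ^ i)"

definition esym_fps :: "'a::comm_ring_1 list \<Rightarrow> 'a fps" where
  "esym_fps xs = (\<Prod>x\<leftarrow>xs. 1 + fps_const x * fps_X)"

definition alt_psum_fps :: "'a::comm_ring_1 list \<Rightarrow> 'a fps" where
  "alt_psum_fps xs = Abs_fps (\<lambda>i. (-1)^i * psum (Suc i) xs)"

lemma esym_fps_nth: "fps_nth (esym_fps xs) k = esym k xs"
proof (induction xs arbitrary: k)
  case Nil
  then show ?case by (cases k) (auto simp: esym_fps_def)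
next
  case (Cons x xs)
  have "esym_fps (x # xs) = esym_fps xs + fps_X * (fps_const x * esym_fps xs)"
    by (simp add: esym_fps_def algebra_simps)
  then show ?case
    using Cons by (cases k) (auto simp: algebra_simps)
qed

lemma alt_psum_fps_Cons:
  "alt_psum_fps (x # xs) = alt_psum_fps xs + Abs_fps (\<lambda>i. (-1)^i * x^(Suc i))"
  by (rule fps_ext) (simp add: alt_psum_fps_def psum_def algebra_simps)

lemma linear_fps_mult_alt_powers:
  "(1 + fps_const x * fps_X) * Abs_fps (\<lambda>i. (-1)^i * x^(Suc i)) = fps_const (x::'a::comm_ring_1)"
proof (rule fps_ext)
  fix n
  have "(1 + fps_const x * fps_X) * Abs_fps (\<lambda>i. (-1)^i * x^(Suc i)) =
        Abs_fps (\<lambda>i. (-1)^i * x^(Suc i)) + fps_X * (fps_const x * Abs_fps (\<lambda>i. (-1)^i * x^(Suc i)))"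
    by (simp add: algebra_simps)
  then show "fps_nth ((1 + fps_const x * fps_X) * Abs_fps (\<lambda>i. (-1)^i * x^(Suc i))) n =
      fps_nth (fps_const x) n"
    by (cases n) (auto simp: algebra_simps)
qed

lemma fps_deriv_esym_fps: "fps_deriv (esym_fps xs) = esym_fps xs * alt_psum_fps xs"
proof (induction xs)
  case Nil
  have "alt_psum_fps [] = (0::'a fps)" by (rule fps_ext) (simp add: alt_psum_fps_def psum_def)
  then show ?case by (simp add: esym_fps_def)
next
  case (Cons x xs)
  define L where "L = 1 + fps_const x * fps_X"
  define Q where "Q = Abs_fps (\<lambda>i. (-1)^i * x^(Suc i))"
  have E: "esym_fps (x # xs) = L * esym_fps xs" by (simp add: esym_fps_def L_def)
  have "fps_deriv (esym_fps (x # xs)) = L * (esym_fps xs * alt_psum_fps xs) + esym_fps xs * (L * Q)"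
    unfolding E using linear_fps_mult_alt_powers[of x] by (simp add: Cons L_def Q_def algebra_simps)
  also have "\<dots> = esym_fps (x # xs) * alt_psum_fps (x # xs)"
    unfolding E alt_psum_fps_Cons Q_def[symmetric] by (simp add: algebra_simps)
  finally show ?case .
qed

lemma newton_identity:
  "of_nat (Suc m) * esym (Suc m) xs = (\<Sum>i=0..m. esym i xs * ((-1)^(m-i) * psum (Suc (m-i)) xs))"
proof -
  have "fps_nth (fps_deriv (esym_fps xs)) m = fps_nth (esym_fps xs * alt_psum_fps xs) m"
    by (simp add: fps_deriv_esym_fps)
  then show ?thesis by (simp add: fps_mult_nth esym_fps_nth alt_psum_fps_def)
qed

lemma esym_eq_0: "k > length xs \<Longrightarrow> esym k xs = 0"
proof (induction xs arbitrary: k)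
  case Nil then show ?case by (cases k) auto
next
  case (Cons x xs) then show ?case by (cases k) auto
qed

lemma esym_length: "esym (length xs) xs = prod_list xs"
  by (induction xs) (auto simp: esym_eq_0)

lemma esym_map_mult: "esym k (map ((*) c) xs) = c ^ k * esym k xs"
proof (induction xs arbitrary: k)
  case Nil then show ?case by (cases k) auto
next
  case (Cons x xs) then show ?case by (cases k) (auto simp: algebra_simps)
qed

lemma poly_prod_linear: "poly (\<Prod>x\<leftarrow>xs. [:-x,1:]) (z::'a::comm_ring_1) = (\<Prod>x\<leftarrow>xs. z - x)"
  by (induction xs) (simp_all add: algebra_simps)

lemma coeff_prod_linear:
  "coeff (\<Prod>x\<leftarrow>xs. [:-x, 1:]) k =
     (if k \<le> length xs then (-1)^(length xs - k) * esym (length xs - k) xs else 0)"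
proof (induction xs arbitrary: k)
  case Nil
  then show ?case by (cases k) auto
next
  case (Cons x xs)
  define P where "P = (\<Prod>x\<leftarrow>xs. [:-x, 1:])"
  define n where "n = length xs"
  have "(\<Prod>x\<leftarrow>x#xs. [:-x, 1:]) = smult (-x) P + pCons 0 P"
    by (simp add: P_def)
  then have c: "coeff (\<Prod>x\<leftarrow>x#xs. [:-x, 1:]) k =
      - x * coeff P k + (if k = 0 then 0 else coeff P (k - 1))"
    by (simp add: coeff_pCons split: nat.splits)
  have IH: "coeff P j = (if j \<le> n then (-1)^(n - j) * esym (n - j) xs else 0)" for j
    using Cons by (simp add: P_def n_def)
  show ?case
  proof (cases k)
    case 0
    then show ?thesis unfolding c IH using esym_eq_0[where k="Suc n" and xs=xs]
      by (simp add: n_def algebra_simps)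
  next
    case (Suc j)
    consider "j < n" | "j = n" | "j > n" by linarith
    then show ?thesis
    proof cases
      case 1
      then have "n - j = Suc (n - k)" using Suc by simp
      then show ?thesis unfolding c IH using 1 Suc by (simp add: n_def algebra_simps)
    next
      case 2
      then show ?thesis unfolding c IH using Suc by (simp add: n_def)
    next
      case 3
      then show ?thesis unfolding c IH using Suc by (simp add: n_def)
    qed
  qed
qed

locale subring_set =
  fixes S :: "'a::comm_ring_1 set"
  assumes one_mem: "1 \<in> S"
    and add_mem: "x \<in> S \<Longrightarrow> y \<in> S \<Longrightarrow> x + y \<in> S"
    and diff_mem: "x \<in> S \<Longrightarrow> y \<in> S \<Longrightarrow> x - y \<in> S"
    and mult_mem: "x \<in> S \<Longrightarrow> y \<in> S \<Longrightarrow> x * y \<in> S"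
begin

lemma zero_mem: "0 \<in> S"
  using diff_mem[OF one_mem one_mem] by simp

lemma uminus_mem: "x \<in> S \<Longrightarrow> - x \<in> S"
  using diff_mem[OF zero_mem, of x] by simp

lemma of_nat_mem: "of_nat n \<in> S"
  by (induction n) (auto intro: zero_mem add_mem one_mem)

lemma of_int_mem: "of_int n \<in> S"
proof -
  obtain a b where "n = int a - int b" using int_diff_cases by blast
  then show ?thesis by (simp add: diff_mem of_nat_mem)
qed

lemma power_mem: "x \<in> S \<Longrightarrow> x ^ n \<in> S"
  by (induction n) (auto intro: one_mem mult_mem)

lemma sum_mem: "(\<And>i. i \<in> A \<Longrightarrow> f i \<in> S) \<Longrightarrow> sum f A \<in> S"
  by (induction A rule: infinite_finite_induct) (auto intro: zero_mem add_mem)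

lemma prod_list_mem: "(\<And>x. x \<in> set xs \<Longrightarrow> x \<in> S) \<Longrightarrow> prod_list xs \<in> S"
  by (induction xs) (auto intro: one_mem mult_mem)

lemma minus_one_power_mem: "(-1) ^ n \<in> S"
  by (intro power_mem uminus_mem one_mem)

lemma psum_mem_if_esym_mem:
  assumes "\<And>k. esym k xs \<in> S"
  shows "psum m xs \<in> S"
proof (induction m rule: less_induct)
  case (less m)
  show ?case
  proof (cases m)
    case 0
    then show ?thesis by (simp add: psum_def sum_list_triv of_nat_mem)
  next
    case (Suc n)
    define R where "R = (\<Sum>i=Suc 0..n. esym i xs * ((-1)^(n-i) * psum (Suc (n-i)) xs))"
    have "of_nat (Suc n) * esym (Suc n) xs = (-1)^n * psum (Suc n) xs + R"
      using newton_identity[of n xs] by (simp add: sum.atLeast_Suc_atMost R_def)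
    moreover have "R \<in> S"
      unfolding R_def using Suc by (intro sum_mem mult_mem assms minus_one_power_mem less) auto
    ultimately have "(-1)^n * psum (Suc n) xs \<in> S"
      using diff_mem[OF mult_mem[OF of_nat_mem assms], of R "Suc n" "Suc n"] by (simp add: algebra_simps)
    then have "(-1)^n * ((-1)^n * psum (Suc n) xs) \<in> S"
      by (rule mult_mem[OF minus_one_power_mem])
    then show ?thesis
      using Suc by (simp add: mult.assoc[symmetric] power_mult_distrib[symmetric])
  qed
qed

lemma fact_esym_mem_if_psum_mem:
  assumes "\<And>i. i \<ge> 1 \<Longrightarrow> psum i xs \<in> S"
  shows "of_nat (fact m) * esym m xs \<in> S"
proof (induction m rule: less_induct)
  case (less m)
  show ?case
  proof (cases m)
    case 0
    then show ?thesis by (simp add: one_mem)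
  next
    case (Suc n)
    have "of_nat (fact m) * esym m xs = of_nat (fact n) * (of_nat (Suc n) * esym (Suc n) xs)"
      using Suc by (simp add: algebra_simps)
    also have "\<dots> = (\<Sum>i=0..n. (of_nat (fact n div fact i) * (of_nat (fact i) * esym i xs)) *
                      ((-1)^(n-i) * psum (Suc (n-i)) xs))"
      unfolding newton_identity sum_distrib_left
    proof (rule sum.cong)
      fix i assume "i \<in> {0..n}"
      then have "fact i dvd (fact n :: nat)" by (intro fact_dvd) auto
      then have "(of_nat (fact n) :: 'a) = of_nat (fact n div fact i) * of_nat (fact i)"
        by (metis dvd_mult_div_cancel mult.commute of_nat_mult)
      then show "of_nat (fact n) * (esym i xs * ((-1)^(n-i) * psum (Suc (n-i)) xs)) =
          of_nat (fact n div fact i) * (of_nat (fact i) * esym i xs) * ((-1)^(n-i) * psum (Suc (n-i)) xs)"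
        by (simp add: algebra_simps)
    qed simp
    also have "\<dots> \<in> S"
      using Suc by (intro sum_mem mult_mem of_nat_mem less minus_one_power_mem assms) auto
    finally show ?thesis .
  qed
qed

end

interpretation Rats_subring: subring_set "\<rat> :: 'a::field_char_0 set"
  by unfold_locales auto

interpretation Ints_subring: subring_set "\<int> :: 'a::comm_ring_1 set"
  by unfold_locales auto

section \<open>Algebraic numbers form a ring\<close>

lemma complex_poly_linear_factors:
  fixes p :: "complex poly"
  obtains xs where "p = smult (lead_coeff p) (\<Prod>x\<leftarrow>xs. [:-x,1:])" "length xs = degree p"
proof -
  obtain xs where xs: "mset xs = proots p" using ex_mset by blast
  have "p = smult (lead_coeff p) (\<Prod>x\<in>#proots p. [:-x, 1:])"
    by (rule complex_poly_decompose_multiset [symmetric])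
  also have "(\<Prod>x\<in>#proots p. [:-x, 1:]) = (\<Prod>x\<leftarrow>xs. [:-x, 1:])"
    by (subst prod_mset_prod_list [symmetric]) (simp add: xs)
  finally have "p = smult (lead_coeff p) (\<Prod>x\<leftarrow>xs. [:-x, 1:])" .
  moreover have "length xs = degree p"
    using xs size_proots_complex[of p] by (metis size_mset)
  ultimately show thesis by (rule that)
qed

lemma algebraic_in_list_with_rational_psums:
  fixes x :: complex
  assumes "algebraic x"
  obtains xs where "x \<in> set xs" "\<And>m. psum m xs \<in> \<rat>"
proof -
  from assms obtain p where p: "\<And>i. coeff p i \<in> \<int>" "p \<noteq> 0" "poly p x = 0"
    by (erule algebraicE)
  obtain xs where xs: "p = smult (lead_coeff p) (\<Prod>x\<leftarrow>xs. [:-x,1:])"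
    using complex_poly_linear_factors by blast
  define c where "c = lead_coeff p"
  have c0: "c \<noteq> 0" using p by (simp add: c_def)
  have "poly p x = c * (\<Prod>y\<leftarrow>xs. x - y)"
    by (subst xs) (simp add: poly_prod_linear c_def)
  then have "x \<in> set xs" using p c0 by (auto simp: prod_list_zero_iff)
  moreover have "esym k xs \<in> \<rat>" for k
  proof (cases "k \<le> length xs")
    case True
    have "coeff p (length xs - k) = c * ((-1)^k * esym k xs)"
      by (subst xs) (simp add: coeff_prod_linear True c_def)
    then have "esym k xs = (-1)^k * coeff p (length xs - k) / c"
      using c0 by (simp add: field_simps)
    moreover have "coeff p (length xs - k) \<in> \<rat>" "c \<in> \<rat>"
      using p(1) unfolding c_def by (auto intro: Ints_subset_Rats[THEN subsetD])
    ultimately show ?thesis by simp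
  qed (simp add: esym_eq_0)
  then have "\<And>m. psum m xs \<in> \<rat>"
    by (intro Rats_subring.psum_mem_if_esym_mem)
  ultimately show ?thesis by (rule that)
qed

lemma algebraic_if_in_list_with_rational_psums:
  fixes zs :: "complex list"
  assumes "\<And>m. m \<ge> 1 \<Longrightarrow> psum m zs \<in> \<rat>" "z \<in> set zs"
  shows "algebraic z"
proof -
  have "esym k zs \<in> \<rat>" for k
  proof -
    have "of_nat (fact k) * esym k zs \<in> \<rat>"
      by (intro Rats_subring.fact_esym_mem_if_psum_mem assms)
    moreover have "(of_nat (fact k) :: complex) \<in> \<rat>" by (rule Rats_of_nat)
    ultimately have "(of_nat (fact k) * esym k zs) / of_nat (fact k) \<in> \<rat>"
      by (rule Rats_divide)
    then show ?thesis by simp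
  qed
  then have "\<forall>i. coeff (\<Prod>x\<leftarrow>zs. [:-x,1:]) i \<in> \<rat>"
    unfolding coeff_prod_linear by (auto intro!: Rats_mult)
  moreover have "(\<Prod>x\<leftarrow>zs. [:-x,1:]) \<noteq> 0" by (auto simp: prod_list_zero_iff)
  moreover have "poly (\<Prod>x\<leftarrow>zs. [:-x,1:]) z = 0"
    unfolding poly_prod_linear using assms(2) by (auto simp: prod_list_zero_iff)
  ultimately show ?thesis unfolding algebraic_altdef by blast
qed

lemma psum_concat_map:
  "psum m (concat (map (\<lambda>a. map (f a) ys) xs)) = (\<Sum>a\<leftarrow>xs. \<Sum>b\<leftarrow>ys. (f a b) ^ m)"
  by (induction xs) (auto simp: psum_def o_def)

lemma sum_list_sum_swap: "(\<Sum>x\<leftarrow>xs. \<Sum>k\<in>A. f x k) = (\<Sum>k\<in>A. \<Sum>x\<leftarrow>xs. f x k)"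
  by (induction xs) (simp_all add: sum.distrib)

lemma algebraic_add_complex:
  fixes x y :: complex
  assumes "algebraic x" "algebraic y"
  shows "algebraic (x + y)"
proof -
  obtain xs where xs: "x \<in> set xs" "\<And>m. psum m xs \<in> \<rat>"
    using algebraic_in_list_with_rational_psums[OF assms(1)] by blast
  obtain ys where ys: "y \<in> set ys" "\<And>m. psum m ys \<in> \<rat>"
    using algebraic_in_list_with_rational_psums[OF assms(2)] by blast
  define zs where "zs = concat (map (\<lambda>a. map (\<lambda>b. a + b) ys) xs)"
  have "psum m zs \<in> \<rat>" for m
  proof -
    have "psum m zs = (\<Sum>a\<leftarrow>xs. \<Sum>b\<leftarrow>ys. \<Sum>k\<le>m. of_nat (m choose k) * a ^ k * b ^ (m - k))"
      unfolding zs_def psum_concat_map by (simp add: binomial_ring)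
    also have "\<dots> = (\<Sum>k\<le>m. of_nat (m choose k) * psum k xs * psum (m - k) ys)"
      by (simp add: psum_def sum_list_sum_swap sum_list_const_mult sum_list_mult_const mult.assoc)
    also have "\<dots> \<in> \<rat>" using xs ys by (intro Rats_sum Rats_mult) auto
    finally show ?thesis .
  qed
  moreover have "x + y \<in> set zs" using xs ys by (auto simp: zs_def)
  ultimately show ?thesis by (intro algebraic_if_in_list_with_rational_psums) auto
qed

lemma algebraic_mult_complex:
  fixes x y :: complex
  assumes "algebraic x" "algebraic y"
  shows "algebraic (x * y)"
proof -
  obtain xs where xs: "x \<in> set xs" "\<And>m. psum m xs \<in> \<rat>"
    using algebraic_in_list_with_rational_psums[OF assms(1)] by blast
  obtain ys where ys: "y \<in> set ys" "\<And>m. psum m ys \<in> \<rat>"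
    using algebraic_in_list_with_rational_psums[OF assms(2)] by blast
  define zs where "zs = concat (map (\<lambda>a. map (\<lambda>b. a * b) ys) xs)"
  have "psum m zs = psum m xs * psum m ys" for m
    unfolding zs_def psum_concat_map
    by (simp add: psum_def power_mult_distrib sum_list_const_mult sum_list_mult_const)
  then have "psum m zs \<in> \<rat>" for m
    using xs ys by simp
  moreover have "x * y \<in> set zs" using xs ys by (auto simp: zs_def)
  ultimately show ?thesis by (intro algebraic_if_in_list_with_rational_psums) auto
qed

lemma algebraic_add_real:
  fixes x y :: real
  assumes "algebraic x" "algebraic y"
  shows "algebraic (x + y)"
  using algebraic_add_complex[of "of_real x" "of_real y"] assms by (simp flip: of_real_add)

lemma algebraic_mult_real:
  fixes x y :: real
  assumes "algebraic x" "algebraic y"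
  shows "algebraic (x * y)"
  using algebraic_mult_complex[of "of_real x" "of_real y"] assms by (simp flip: of_real_mult)

section \<open>The integral group ring of the additive group of \<open>\<complex>\<close>\<close>

text \<open>
  An element \<open>\<Sum> n\<^sub>v [v]\<close> of \<open>\<int>[\<complex>]\<close> is a finitely supported \<open>complex \<Rightarrow>\<^sub>0 int\<close>; the
  product of poly-mappings is the group ring product \<open>[u] \<cdot> [v] = [u + v]\<close>, and \<open>[v]\<close> is
  \<open>frag_of v\<close>.
\<close>

type_synonym group_ring = "complex \<Rightarrow>\<^sub>0 int"

definition lin_ext :: "(complex \<Rightarrow> complex) \<Rightarrow> group_ring \<Rightarrow> complex" where
  "lin_ext \<phi> c = (\<Sum>v\<in>Poly_Mapping.keys c. of_int (Poly_Mapping.lookup c v) * \<phi> v)"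

lemma lin_ext_superset:
  assumes "finite A" "Poly_Mapping.keys c \<subseteq> A"
  shows "lin_ext \<phi> c = (\<Sum>v\<in>A. of_int (Poly_Mapping.lookup c v) * \<phi> v)"
  unfolding lin_ext_def using assms
  by (intro sum.mono_neutral_left) (auto simp: in_keys_iff)

lemma lin_ext_zero [simp]: "lin_ext \<phi> 0 = 0"
  by (simp add: lin_ext_def)

lemma lin_ext_single [simp]: "lin_ext \<phi> (Poly_Mapping.single v k) = of_int k * \<phi> v"
  by (cases "k = 0") (simp_all add: lin_ext_def)

lemma lin_ext_add: "lin_ext \<phi> (a + b) = lin_ext \<phi> a + lin_ext \<phi> b"
proof -
  let ?A = "Poly_Mapping.keys a \<union> Poly_Mapping.keys b"
  have "lin_ext \<phi> (a + b) = (\<Sum>v\<in>?A. of_int (Poly_Mapping.lookup (a + b) v) * \<phi> v)"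
    by (rule lin_ext_superset) (auto simp: keys_add)
  also have "\<dots> = (\<Sum>v\<in>?A. of_int (Poly_Mapping.lookup a v) * \<phi> v) +
                   (\<Sum>v\<in>?A. of_int (Poly_Mapping.lookup b v) * \<phi> v)"
    by (simp add: lookup_add sum.distrib algebra_simps)
  also have "\<dots> = lin_ext \<phi> a + lin_ext \<phi> b"
    by (subst (1 2) lin_ext_superset[symmetric]) auto
  finally show ?thesis .
qed

lemma lin_ext_uminus: "lin_ext \<phi> (- a) = - lin_ext \<phi> a"
  by (simp add: lin_ext_def sum_negf)

lemma lin_ext_diff: "lin_ext \<phi> (a - b) = lin_ext \<phi> a - lin_ext \<phi> b"
  using lin_ext_add[of \<phi> a "-b"] by (simp add: lin_ext_uminus)

lemma lin_ext_sum: "lin_ext \<phi> (\<Sum>i\<in>I. f i) = (\<Sum>i\<in>I. lin_ext \<phi> (f i))"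
  by (induction I rule: infinite_finite_induct) (simp_all add: lin_ext_add)

lemma lin_ext_sum_list: "lin_ext \<phi> (\<Sum>x\<leftarrow>xs. f x) = (\<Sum>x\<leftarrow>xs. lin_ext \<phi> (f x))"
  by (induction xs) (simp_all add: lin_ext_add)

lemma lin_ext_one [simp]: "lin_ext \<phi> 1 = \<phi> 0"
  by (simp flip: single_one)

lemma lin_ext_of_nat [simp]: "lin_ext \<phi> (of_nat k) = of_nat k * \<phi> 0"
  by (simp flip: single_of_nat)

lemma lin_ext_fact [simp]: "lin_ext \<phi> (fact k) = fact k * \<phi> 0"
  by (metis lin_ext_of_nat of_nat_fact)

lemma lin_ext_cong:
  "(\<And>v. v \<in> Poly_Mapping.keys c \<Longrightarrow> \<phi> v = \<psi> v) \<Longrightarrow> lin_ext \<phi> c = lin_ext \<psi> c"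
  by (simp add: lin_ext_def)

lemma lin_ext_fun_cmult: "lin_ext (\<lambda>v. k * \<phi> v) c = k * lin_ext \<phi> c"
  unfolding lin_ext_def sum_distrib_left by (rule sum.cong) (simp_all add: algebra_simps)

lemma lin_ext_fun_multc: "lin_ext (\<lambda>v. \<phi> v * k) c = lin_ext \<phi> c * k"
  unfolding lin_ext_def sum_distrib_right by (rule sum.cong) (simp_all add: algebra_simps)

lemma lin_ext_fun_diff: "lin_ext (\<lambda>v. \<phi> v - \<psi> v) c = lin_ext \<phi> c - lin_ext \<psi> c"
  by (simp add: lin_ext_def sum_subtractf algebra_simps)

lemma lin_ext_fun_sum: "lin_ext (\<lambda>v. \<Sum>i\<in>I. f i v) c = (\<Sum>i\<in>I. lin_ext (f i) c)"
  by (simp add: lin_ext_def sum_distrib_left sum.swap[of _ I])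

lemma lin_ext_indicator:
  "lin_ext (\<lambda>v. if v = w then 1 else 0) c = of_int (Poly_Mapping.lookup c w)"
  by (cases "w \<in> Poly_Mapping.keys c")
     (auto simp: lin_ext_def if_distrib in_keys_iff cong: if_cong)

lemma lin_ext_at_zero:
  assumes "\<And>v. v \<in> Poly_Mapping.keys c \<Longrightarrow> v \<noteq> 0 \<Longrightarrow> \<phi> v = 0"
  shows "lin_ext \<phi> c = of_int (Poly_Mapping.lookup c 0) * \<phi> 0"
proof -
  have "lin_ext \<phi> c = lin_ext (\<lambda>v. \<phi> 0 * (if v = 0 then 1 else 0)) c"
    by (intro lin_ext_cong) (use assms in auto)
  then show ?thesis by (simp add: lin_ext_fun_cmult lin_ext_indicator)
qed

lemma norm_lin_ext_le:
  assumes "\<And>v. v \<in> Poly_Mapping.keys c \<Longrightarrow> cmod (\<phi> v) \<le> K"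
  shows "cmod (lin_ext \<phi> c) \<le> (\<Sum>v\<in>Poly_Mapping.keys c. \<bar>real_of_int (Poly_Mapping.lookup c v)\<bar>) * K"
proof -
  have "cmod (lin_ext \<phi> c) \<le> (\<Sum>v\<in>Poly_Mapping.keys c. cmod (of_int (Poly_Mapping.lookup c v) * \<phi> v))"
    unfolding lin_ext_def by (rule norm_sum)
  also have "\<dots> \<le> (\<Sum>v\<in>Poly_Mapping.keys c. \<bar>real_of_int (Poly_Mapping.lookup c v)\<bar> * K)"
    by (intro sum_mono) (auto simp: norm_mult intro!: mult_left_mono assms)
  finally show ?thesis by (simp add: sum_distrib_right)
qed

lemma lin_ext_frag_of_mult: "lin_ext \<phi> (frag_of u * b) = lin_ext (\<lambda>v. \<phi> (u + v)) b"
proof -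
  have "Poly_Mapping.keys b \<subseteq> UNIV" by simp
  then show ?thesis
  proof (induction b rule: frag_induction)
    case (one x) then show ?case by (simp add: mult_single)
  next
    case (diff a b) then show ?case by (simp add: right_diff_distrib lin_ext_diff)
  qed simp
qed

lemma lin_ext_mult: "lin_ext \<phi> (a * b) = lin_ext (\<lambda>u. lin_ext (\<lambda>v. \<phi> (u + v)) b) a"
proof -
  have "Poly_Mapping.keys a \<subseteq> UNIV" by simp
  then show ?thesis
  proof (induction a rule: frag_induction)
    case (one x) then show ?case by (simp add: lin_ext_frag_of_mult)
  next
    case (diff a1 a2) then show ?case by (simp add: left_diff_distrib lin_ext_diff)
  qed simp
qed

locale character =
  fixes \<kappa> :: "complex \<Rightarrow> complex"
  assumes add: "\<kappa> (u + v) = \<kappa> u * \<kappa> v"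
    and zero: "\<kappa> 0 = 1"
begin

lemma lin_ext_mult: "lin_ext \<kappa> (a * b) = lin_ext \<kappa> a * lin_ext \<kappa> b"
  by (simp add: lin_ext_mult add lin_ext_fun_cmult lin_ext_fun_multc)

lemma lin_ext_power: "lin_ext \<kappa> (a ^ n) = lin_ext \<kappa> a ^ n"
  by (induction n) (simp_all add: lin_ext_mult zero)

lemma lin_ext_prod_list: "lin_ext \<kappa> (prod_list xs) = (\<Prod>x\<leftarrow>xs. lin_ext \<kappa> x)"
  by (induction xs) (simp_all add: lin_ext_mult zero)

end

interpretation exp_character: character exp
  by unfold_locales (simp_all add: exp_add)

lemma character_exp_scaled: "character (\<lambda>v. exp (t * v))"
  by unfold_locales (simp_all add: distrib_left exp_add)

definition mirror :: "group_ring \<Rightarrow> group_ring" where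
  "mirror c = frag_extend (\<lambda>v. frag_of (- v)) c"

lemma lin_ext_mirror: "lin_ext \<phi> (mirror c) = lin_ext (\<lambda>v. \<phi> (- v)) c"
proof -
  have "Poly_Mapping.keys c \<subseteq> UNIV" by simp
  then show ?thesis
  proof (induction c rule: frag_induction)
    case (diff a b) then show ?case by (simp add: mirror_def frag_extend_diff lin_ext_diff)
  qed (simp_all add: mirror_def)
qed

lemma keys_mirror: "Poly_Mapping.keys (mirror c) \<subseteq> uminus ` Poly_Mapping.keys c"
  unfolding mirror_def using keys_frag_extend[of "\<lambda>v. frag_of (- v)" c] by auto

lemma lookup_mult_mirror_zero:
  "Poly_Mapping.lookup (c * mirror c) 0 = (\<Sum>u\<in>Poly_Mapping.keys c. Poly_Mapping.lookup c u ^ 2)"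
proof -
  have "of_int (Poly_Mapping.lookup (c * mirror c) 0) = lin_ext (\<lambda>v. if v = 0 then 1 else 0) (c * mirror c)"
    by (simp add: lin_ext_indicator)
  also have "\<dots> = lin_ext (\<lambda>u. lin_ext (\<lambda>v. if v = u then 1 else 0) c) c"
    unfolding lin_ext_mult lin_ext_mirror
    by (intro lin_ext_cong arg_cong2[where f=lin_ext] ext) (auto simp: algebra_simps)
  also have "\<dots> = of_int (\<Sum>u\<in>Poly_Mapping.keys c. Poly_Mapping.lookup c u ^ 2)"
    by (simp add: lin_ext_indicator lin_ext_def power2_eq_square)
  finally show ?thesis by (simp only: of_int_eq_iff)
qed

lemma lookup_mult_mirror_zero_pos:
  assumes "c \<noteq> 0"
  shows "Poly_Mapping.lookup (c * mirror c) 0 > 0"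
  unfolding lookup_mult_mirror_zero
proof (rule sum_pos)
  show "Poly_Mapping.keys c \<noteq> {}" using assms by simp
qed (auto simp: in_keys_iff)

section \<open>An exponential relation with integral power sums\<close>

lemma map_poly_of_int_mult:
  "map_poly (of_int :: int \<Rightarrow> 'a::comm_ring_1) (p * q) = map_poly of_int p * map_poly of_int q"
  by (rule poly_eqI) (simp add: coeff_map_poly coeff_mult of_int_sum)

lemma map_poly_of_int_power:
  "map_poly (of_int :: int \<Rightarrow> 'a::comm_ring_1) (p ^ n) = map_poly of_int p ^ n"
  by (induction n) (simp_all add: map_poly_of_int_mult)

lemma map_poly_of_int_prod:
  "map_poly (of_int :: int \<Rightarrow> 'a::comm_ring_1) (\<Prod>v\<in>A. f v) = (\<Prod>v\<in>A. map_poly of_int (f v))"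
  by (induction A rule: infinite_finite_induct) (simp_all add: map_poly_of_int_mult)

lemma poly_eq_sum_atMost:
  assumes "degree p \<le> N"
  shows "poly p x = (\<Sum>i\<le>N. coeff p i * (x::'a::comm_ring_1) ^ i)"
  unfolding poly_altdef using assms
  by (intro sum.mono_neutral_left) (auto simp: coeff_eq_0)

lemma poly_map_poly_of_int:
  "poly (map_poly of_int p) (z :: 'a::comm_ring_1) = (\<Sum>i\<le>degree p. of_int (coeff p i) * z ^ i)"
  by (subst poly_eq_sum_atMost[OF map_poly_degree_leq]) (auto simp: coeff_map_poly)

lemma (in character) lin_ext_poly:
  "lin_ext \<kappa> (poly (map_poly of_int p) x) = poly (map_poly of_int p) (lin_ext \<kappa> x)"
  unfolding poly_map_poly_of_int lin_ext_sum
  by (intro sum.cong refl) (simp add: lin_ext_mult lin_ext_power zero flip: single_of_int)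

lemma frag_of_power: "frag_of u ^ n = frag_of (of_nat n * u)"
  by (induction n) (simp_all add: mult_single algebra_simps)

definition int_power_sums :: "int \<Rightarrow> group_ring \<Rightarrow> bool" where
  "int_power_sums d c \<longleftrightarrow> (\<forall>e. lin_ext (\<lambda>v. (of_int d * v) ^ e) c \<in> \<int>)"

lemma subring_set_int_power_sums: "subring_set {c. int_power_sums d c}"
proof unfold_locales
  show "1 \<in> {c. int_power_sums d c}" by (auto simp: int_power_sums_def power_0_left)
next
  fix x y assume x: "x \<in> {c. int_power_sums d c}" and y: "y \<in> {c. int_power_sums d c}"
  then show "x + y \<in> {c. int_power_sums d c}" "x - y \<in> {c. int_power_sums d c}"
    by (auto simp: int_power_sums_def lin_ext_add lin_ext_diff)
  have "lin_ext (\<lambda>v. (of_int d * v) ^ e) (x * y) =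
      (\<Sum>k\<le>e. of_nat (e choose k) * lin_ext (\<lambda>v. (of_int d * v) ^ (e - k)) y *
               lin_ext (\<lambda>u. (of_int d * u) ^ k) x)" for e
    unfolding lin_ext_mult
    by (simp add: distrib_left binomial_ring lin_ext_fun_sum lin_ext_fun_cmult lin_ext_fun_multc
        mult_ac)
  then show "x * y \<in> {c. int_power_sums d c}"
    using x y by (auto simp: int_power_sums_def intro!: Ints_sum Ints_mult)
qed

lemma int_power_sums_mirror:
  assumes "int_power_sums d c"
  shows "int_power_sums d (mirror c)"
  unfolding int_power_sums_def
proof
  fix e
  have "lin_ext (\<lambda>v. (of_int d * v) ^ e) (mirror c) = (-1) ^ e * lin_ext (\<lambda>v. (of_int d * v) ^ e) c"
    unfolding lin_ext_mirror lin_ext_fun_cmult[symmetric]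
    by (intro lin_ext_cong) (simp add: power_mult_distrib[symmetric])
  then show "lin_ext (\<lambda>v. (of_int d * v) ^ e) (mirror c) \<in> \<int>"
    using assms by (auto simp: int_power_sums_def)
qed

definition algebraic_support :: "group_ring \<Rightarrow> bool" where
  "algebraic_support c \<longleftrightarrow> (\<forall>v\<in>Poly_Mapping.keys c. algebraic v)"

interpretation algebraic_support: subring_set "{c. algebraic_support c}"
proof unfold_locales
  fix x y assume "x \<in> {c. algebraic_support c}" "y \<in> {c. algebraic_support c}"
  then show "x + y \<in> {c. algebraic_support c}" "x - y \<in> {c. algebraic_support c}"
    "x * y \<in> {c. algebraic_support c}"
    using keys_add[of x y] keys_add[of x "-y"] keys_mult[of x y]
    by (auto simp: algebraic_support_def intro!: algebraic_add_complex)
qed (simp add: algebraic_support_def)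

lemma algebraic_support_mirror:
  "algebraic_support c \<Longrightarrow> algebraic_support (mirror c)"
  using keys_mirror[of c] by (auto simp: algebraic_support_def)

text \<open>
  \<open>\<Prod>\<^sub>a M([a])\<close> is the top elementary symmetric function of the \<open>M([a])\<close>, whose power sums
  have integral power sums; the factor \<open>n!\<close> clears the denominators of Newton's identities.
\<close>

lemma int_power_sums_prod_poly_frag_of:
  fixes as :: "complex list" and M :: "int poly"
  assumes "\<And>e. psum e (map (\<lambda>a. of_int d * a) as) \<in> \<int>"
  shows "int_power_sums d (of_nat (fact (length as)) *
           prod_list (map (\<lambda>a. poly (map_poly of_int M) (frag_of a)) as))"
proof -
  interpret ips: subring_set "{c. int_power_sums d c}" by (rule subring_set_int_power_sums)
  define xs where "xs = map (\<lambda>a. poly (map_poly of_int M) (frag_of a)) as"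
  have frag_sum: "int_power_sums d (\<Sum>a\<leftarrow>as. frag_of (of_nat k * a))" for k
  proof -
    have "(of_int d * (of_nat k * a)) ^ e = of_nat k ^ e * (of_int d * a) ^ e" for a :: complex and e
      by (simp add: power_mult_distrib)
    then have "lin_ext (\<lambda>v. (of_int d * v) ^ e) (\<Sum>a\<leftarrow>as. frag_of (of_nat k * a)) =
          of_nat k ^ e * psum e (map (\<lambda>a. of_int d * a) as)" for e
      by (simp add: lin_ext_sum_list psum_def o_def sum_list_const_mult)
    then show ?thesis using assms by (auto simp: int_power_sums_def)
  qed
  have "int_power_sums d (psum i xs)" for i
  proof -
    have "psum i xs = (\<Sum>a\<leftarrow>as. poly (map_poly of_int (M ^ i)) (frag_of a))"
      by (simp add: psum_def xs_def o_def map_poly_of_int_power poly_power)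
    also have "\<dots> = (\<Sum>k\<le>degree (M ^ i). of_int (coeff (M ^ i) k) * (\<Sum>a\<leftarrow>as. frag_of (of_nat k * a)))"
      by (simp add: poly_map_poly_of_int frag_of_power sum_list_sum_swap sum_list_const_mult)
    also have "\<dots> \<in> {c. int_power_sums d c}"
      using frag_sum by (intro ips.sum_mem ips.mult_mem ips.of_int_mem) auto
    finally show ?thesis by simp
  qed
  then have "of_nat (fact (length xs)) * esym (length xs) xs \<in> {c. int_power_sums d c}"
    by (intro ips.fact_esym_mem_if_psum_mem) auto
  then show ?thesis using esym_length[of xs] by (simp add: xs_def)
qed

lemma inj_on_exp_scaled:
  fixes a :: complex
  assumes "a \<noteq> 0" and "\<delta> * cmod a \<le> 2 * pi"
  shows "inj_on (\<lambda>t. exp (complex_of_real t * a)) {0<..<\<delta>}"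
proof (rule inj_onI)
  fix s t assume s: "s \<in> {0<..<\<delta>}" and t: "t \<in> {0<..<\<delta>}"
    and "exp (complex_of_real s * a) = exp (complex_of_real t * a)"
  then obtain n :: int where n:
    "complex_of_real s * a = complex_of_real t * a + (of_int (2 * n) * pi) * \<i>"
    unfolding exp_eq by blast
  have "cmod (complex_of_real (s - t) * a) = cmod ((of_int (2 * n) * pi) * \<i>)"
    using n by (simp add: algebra_simps)
  then have "\<bar>s - t\<bar> * cmod a = 2 * pi * \<bar>of_int n\<bar>"
    by (simp add: norm_mult del: of_real_diff)
  moreover have "\<bar>s - t\<bar> * cmod a < \<delta> * cmod a"
    using s t assms(1) by (intro mult_strict_right_mono) auto
  ultimately have "2 * pi * \<bar>real_of_int n\<bar> < 2 * pi * 1"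
    using assms(2) by linarith
  then have "\<bar>real_of_int n\<bar> < 1" by (subst (asm) mult_less_cancel_left_pos) auto
  then have "n = 0" by (metis of_int_abs of_int_less_1_iff zabs_less_one_iff)
  then have "complex_of_real (s - t) * a = 0" using n by (simp add: algebra_simps)
  then show "s = t" using assms(1) by auto
qed

lemma exists_real_scaling_avoiding_roots:
  fixes A :: "complex set" and P :: "complex poly"
  assumes "finite A" "0 \<notin> A" "P \<noteq> 0"
  obtains t :: real where "\<forall>a\<in>A. poly P (exp (of_real t * a)) \<noteq> 0"
proof -
  define \<delta> where "\<delta> = 1 / (1 + (\<Sum>a\<in>A. cmod a))"
  have "(\<Sum>a\<in>A. cmod a) \<ge> 0" by (intro sum_nonneg) auto
  then have "\<delta> > 0" by (simp add: \<delta>_def)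
  define Bad where "Bad a = (\<lambda>t. exp (of_real t * a)) -` {z. poly P z = 0} \<inter> {0<..<\<delta>}" for a
  have "finite (Bad a)" if "a \<in> A" for a
    unfolding Bad_def
  proof (rule finite_vimage_IntI)
    show "finite {z. poly P z = 0}" using poly_roots_finite[OF assms(3)] .
    have "cmod a \<le> (\<Sum>a\<in>A. cmod a)" using that assms(1) by (intro member_le_sum) auto
    then have "\<delta> * cmod a \<le> 1"
      using \<open>(\<Sum>a\<in>A. cmod a) \<ge> 0\<close> by (simp add: \<delta>_def field_simps)
    then show "inj_on (\<lambda>t. exp (complex_of_real t * a)) {0<..<\<delta>}"
      using that assms(2) pi_gt3 by (intro inj_on_exp_scaled) auto
  qed
  then have "finite (\<Union>a\<in>A. Bad a)" using assms(1) by auto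
  moreover have "\<not> finite {0<..<\<delta>}" using \<open>\<delta> > 0\<close> by (rule infinite_Ioo)
  ultimately obtain t where "t \<in> {0<..<\<delta>}" "t \<notin> (\<Union>a\<in>A. Bad a)"
    by (metis finite_subset subsetI)
  then show thesis by (intro that[of t]) (auto simp: Bad_def)
qed

lemma (in character) lin_ext_fact_prod_poly_frag_of:
  "lin_ext \<kappa> (of_nat (fact (length as)) * prod_list (map (\<lambda>a. poly (map_poly of_int M) (frag_of a)) as)) =
    fact (length as) * (\<Prod>a\<leftarrow>as. poly (map_poly of_int M) (\<kappa> a))"
  by (simp add: lin_ext_mult lin_ext_prod_list lin_ext_poly zero o_def)

lemma algebraic_support_poly_frag_of:
  assumes "algebraic a"
  shows "algebraic_support (poly (map_poly of_int M) (frag_of a))"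
proof -
  have "algebraic (of_nat k * a)" for k
    using assms by (intro algebraic_mult_complex) auto
  then show ?thesis
    unfolding poly_map_poly_of_int frag_of_power
    by (intro algebraic_support.sum_mem[simplified] algebraic_support.mult_mem[simplified]
        algebraic_support.of_int_mem[simplified]) (auto simp: algebraic_support_def)
qed

lemma exp_relation_in_group_ring:
  fixes as :: "complex list" and M :: "int poly" and \<alpha> :: complex
  assumes "M \<noteq> 0" and "\<alpha> \<in> set as" and "poly (map_poly of_int M) (exp \<alpha>) = (0::complex)"
    and "0 \<notin> set as" and "\<forall>a\<in>set as. algebraic a"
    and "\<And>e. psum e (map (\<lambda>a. of_int d * a) as) \<in> \<int>"
  obtains \<Theta> where "lin_ext exp \<Theta> = 0" "Poly_Mapping.lookup \<Theta> 0 \<noteq> 0"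
    "int_power_sums d \<Theta>" "algebraic_support \<Theta>"
proof -
  define c where "c = of_nat (fact (length as)) *
    prod_list (map (\<lambda>a. poly (map_poly of_int M) (frag_of a)) as)"
  have exp_c: "lin_ext exp c = 0"
    using assms(2,3) unfolding c_def exp_character.lin_ext_fact_prod_poly_frag_of
    by (auto simp: prod_list_zero_iff)
  have "map_poly (of_int :: int \<Rightarrow> complex) M \<noteq> 0" using assms(1) by (simp add: map_poly_eq_0_iff)
  then obtain t :: real where "\<forall>a\<in>set as. poly (map_poly of_int M) (exp (of_real t * a)) \<noteq> (0::complex)"
    using exists_real_scaling_avoiding_roots[of "set as"] assms(4) by auto
  then have "lin_ext (\<lambda>v. exp (of_real t * v)) c \<noteq> 0"
    unfolding c_def character.lin_ext_fact_prod_poly_frag_of[OF character_exp_scaled]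
    by (auto simp: prod_list_zero_iff)
  then have "c \<noteq> 0" by auto
  have "int_power_sums d c"
    unfolding c_def by (rule int_power_sums_prod_poly_frag_of) (use assms(6) in auto)
  have "algebraic_support (poly (map_poly of_int M) (frag_of a))" if "a \<in> set as" for a
    using assms(5) that by (intro algebraic_support_poly_frag_of) auto
  then have "algebraic_support c"
    unfolding c_def
    by (intro algebraic_support.mult_mem[simplified] algebraic_support.of_nat_mem[simplified]
        algebraic_support.prod_list_mem[simplified]) auto
  show thesis
  proof (rule that[of "c * mirror c"])
    show "lin_ext exp (c * mirror c) = 0"
      by (simp add: exp_character.lin_ext_mult exp_c)
    show "Poly_Mapping.lookup (c * mirror c) 0 \<noteq> 0"
      using lookup_mult_mirror_zero_pos[OF \<open>c \<noteq> 0\<close>] by simp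
    show "int_power_sums d (c * mirror c)"
      using \<open>int_power_sums d c\<close> int_power_sums_mirror
        subring_set.mult_mem[OF subring_set_int_power_sums] by auto
    show "algebraic_support (c * mirror c)"
      using \<open>algebraic_support c\<close> algebraic_support_mirror algebraic_support.mult_mem by auto
  qed
qed

section \<open>Hermite's auxiliary function\<close>

lemma norm_exp_mult_poly_diff_le:
  fixes F f :: "complex poly" and R B :: real and v :: complex
  assumes deriv: "pderiv F = F - f"
    and bound: "\<And>z. cmod z \<le> R \<Longrightarrow> cmod (poly f z) \<le> B"
    and v: "cmod v \<le> R"
  shows "cmod (exp v * poly F 0 - poly F v) \<le> exp R * exp R * B * R"
proof -
  define \<Phi> where "\<Phi> z = exp (- z) * poly F z" for z
  have R0: "R \<ge> 0" using v norm_ge_zero order_trans by blast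
  have "cmod (poly f 0) \<le> B" using R0 by (intro bound) simp
  then have B0: "B \<ge> 0" by (meson norm_ge_zero order_trans)
  have norm_exp_le: "norm (exp (- z)) \<le> exp R" if "cmod z \<le> R" for z
    using abs_Re_le_cmod[of z] that by (simp add: norm_exp_eq_Re)
  have \<Phi>_deriv: "(\<Phi> has_field_derivative (- exp (- z) * poly f z)) (at z within cball 0 R)" for z
  proof -
    have "(\<Phi> has_field_derivative (exp (- z) * (-1) * poly F z + exp (- z) * poly (pderiv F) z)) (at z)"
      unfolding \<Phi>_def by (auto intro!: derivative_eq_intros)
    then show ?thesis
      by (simp add: deriv algebra_simps has_field_derivative_at_within)
  qed
  have \<Phi>_deriv_bound: "norm (- exp (- z) * poly f z) \<le> exp R * B" if "z \<in> cball 0 R" for z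
    unfolding norm_mult norm_minus_cancel
    using that norm_exp_le[of z] bound[of z] by (intro mult_mono) auto
  have "norm (\<Phi> v - \<Phi> 0) \<le> exp R * B * norm (v - 0)"
    by (rule field_differentiable_bound[OF convex_cball \<Phi>_deriv \<Phi>_deriv_bound])
      (use v R0 in auto)
  also have "\<dots> \<le> exp R * B * R"
    using v B0 by (intro mult_left_mono) auto
  finally have \<Phi>_bound: "norm (\<Phi> v - \<Phi> 0) \<le> exp R * B * R" .
  have "exp v * poly F 0 - poly F v = - exp v * (\<Phi> v - \<Phi> 0)"
    unfolding \<Phi>_def by (simp add: algebra_simps flip: exp_add)
  then have "cmod (exp v * poly F 0 - poly F v) = norm (exp v) * norm (\<Phi> v - \<Phi> 0)"
    by (simp add: norm_mult)
  also have "\<dots> \<le> exp R * (exp R * B * R)"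
    using norm_exp_le[of "- v"] v \<Phi>_bound by (intro mult_mono) auto
  finally show ?thesis by (simp add: mult_ac)
qed

lemma higher_pderiv_pcompose_scale:
  fixes q :: "'a::idom poly"
  shows "(pderiv ^^ j) (pcompose q [:0, a:]) = smult (a ^ j) (pcompose ((pderiv ^^ j) q) [:0, a:])"
proof (induction j)
  case (Suc j)
  have "pderiv [:0, a:] = [:a:]" by (simp add: pderiv_pCons)
  then show ?case
    using Suc by (simp add: pderiv_smult pderiv_pcompose mult.commute)
qed simp

lemma linear_power_dvd_higher_pderiv:
  fixes q :: "'a::idom poly"
  assumes "[:-u,1:] ^ k dvd q" "j \<le> k"
  shows "[:-u,1:] ^ (k - j) dvd (pderiv ^^ j) q"
  using assms(2)
proof (induction j)
  case 0 then show ?case using assms(1) by simp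
next
  case (Suc j)
  then obtain s where s: "(pderiv ^^ j) q = [:-u,1:] ^ Suc (k - Suc j) * s"
    by (metis Suc_diff_Suc Suc_le_lessD dvdE less_imp_le_nat)
  have "pderiv ((pderiv ^^ j) q) = [:-u,1:] ^ (k - Suc j) *
      ([:-u,1:] * pderiv s + smult (of_nat (Suc (k - Suc j))) s * pderiv [:-u,1:])"
    unfolding s pderiv_mult pderiv_power_Suc by (simp add: algebra_simps)
  then show ?case by simp
qed

lemma poly_higher_pderiv_eq_0_at_multiple_root:
  fixes q :: "'a::idom poly"
  assumes "[:-u,1:] ^ k dvd q" "j < k"
  shows "poly ((pderiv ^^ j) q) u = 0"
proof -
  have "[:-u,1:] dvd [:-u,1:] ^ (k - j)" using assms(2)
    by (metis dvd_power less_imp_neq zero_less_diff)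
  also have "\<dots> dvd (pderiv ^^ j) q"
    using assms by (intro linear_power_dvd_higher_pderiv) auto
  finally show ?thesis by (simp add: poly_eq_0_iff_dvd)
qed

lemma pochhammer_Suc_of_nat:
  "pochhammer (1 + of_nat n :: 'a::{comm_semiring_1, semiring_char_0}) j = fact j * of_nat ((n + j) choose j)"
proof -
  have "fact (n + j) = fact n * pochhammer (Suc n) j"
    using pochhammer_product'[of "1::nat" n j] by (simp add: pochhammer_fact)
  moreover have "fact (n + j) = fact n * (fact j * ((n + j) choose j))"
    using binomial_fact_lemma[of j "n + j"] by (simp add: algebra_simps)
  ultimately have "pochhammer (Suc n) j = fact j * ((n + j) choose j)"
    by (metis fact_nonzero mult_left_cancel)
  moreover have "pochhammer (1 + of_nat n :: 'a) j = of_nat (pochhammer (Suc n) j)"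
    using pochhammer_of_nat[of "Suc n" j] by simp
  ultimately show ?thesis by simp
qed

lemma poly_higher_pderiv_map_poly_of_int:
  fixes H :: "int poly"
  shows "poly ((pderiv ^^ j) (map_poly of_int H)) (u :: 'a::{idom, ring_char_0}) =
     fact j * (\<Sum>n\<le>degree H. of_nat ((n + j) choose j) * of_int (coeff H (n + j)) * u ^ n)"
proof -
  have "degree ((pderiv ^^ j) (map_poly (of_int :: int \<Rightarrow> 'a) H)) \<le> degree H"
    using map_poly_degree_leq[of "of_int :: int \<Rightarrow> 'a" H]
      degree_higher_pderiv[of j "map_poly (of_int :: int \<Rightarrow> 'a) H"] by linarith
  then have "poly ((pderiv ^^ j) (map_poly of_int H)) u =
     (\<Sum>n\<le>degree H. coeff ((pderiv ^^ j) (map_poly of_int H)) n * u ^ n)"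
    by (rule poly_eq_sum_atMost)
  also have "\<dots> = (\<Sum>n\<le>degree H. fact j * (of_nat ((n + j) choose j) * of_int (coeff H (n + j)) * u ^ n))"
    by (intro sum.cong refl) (simp add: coeff_higher_pderiv pochhammer_Suc_of_nat coeff_map_poly)
  finally show ?thesis by (simp add: sum_distrib_left)
qed

lemma pderiv_sum_higher_pderiv:
  fixes f :: "'a::idom poly"
  assumes "degree f \<le> N"
  shows "pderiv (\<Sum>j\<le>N. (pderiv ^^ j) f) = (\<Sum>j\<le>N. (pderiv ^^ j) f) - f"
proof -
  have "(pderiv ^^ Suc N) f = 0"
    by (rule poly_eqI) (use assms in \<open>simp del: funpow.simps add: coeff_higher_pderiv coeff_eq_0\<close>)
  then have "(\<Sum>j\<le>N. (pderiv ^^ Suc j) f) = (\<Sum>j\<le>Suc N. (pderiv ^^ j) f) - f"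
    by (subst sum.atMost_Suc_shift) simp
  then show ?thesis
    using higher_pderiv_sum[of 1 "\<lambda>j. (pderiv ^^ j) f" "{..N}"] \<open>(pderiv ^^ Suc N) f = 0\<close>
    by simp
qed

lemma norm_poly_map_poly_of_int_le:
  fixes G :: "int poly" and w :: complex
  assumes "cmod w \<le> W"
  shows "cmod (poly (map_poly of_int G) w) \<le>
    (\<Sum>i\<le>degree G. \<bar>real_of_int (coeff G i)\<bar>) * (1 + W) ^ degree G"
proof -
  have W0: "W \<ge> 0" using assms norm_ge_zero order_trans by blast
  have "cmod (poly (map_poly of_int G) w) \<le> (\<Sum>i\<le>degree G. cmod (of_int (coeff G i) * w ^ i))"
    unfolding poly_map_poly_of_int by (rule norm_sum)
  also have "\<dots> \<le> (\<Sum>i\<le>degree G. \<bar>real_of_int (coeff G i)\<bar> * (1 + W) ^ degree G)"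
  proof (intro sum_mono)
    fix i assume i: "i \<in> {..degree G}"
    have "cmod w ^ i \<le> (1 + W) ^ i" using assms by (intro power_mono) auto
    also have "\<dots> \<le> (1 + W) ^ degree G"
      using i W0 by (intro power_increasing) auto
    finally show "cmod (of_int (coeff G i) * w ^ i) \<le> \<bar>real_of_int (coeff G i)\<bar> * (1 + W) ^ degree G"
      by (auto simp: norm_mult norm_power intro!: mult_left_mono)
  qed
  finally show ?thesis by (simp add: sum_distrib_right)
qed

definition hermite_kernel :: "int poly \<Rightarrow> nat \<Rightarrow> int poly" where
  "hermite_kernel G p = monom 1 (p - 1) * G ^ p"

definition hermite_f :: "int \<Rightarrow> int poly \<Rightarrow> nat \<Rightarrow> complex poly" where
  "hermite_f d G p =
     smult (1 / fact (p - 1)) (pcompose (map_poly of_int (hermite_kernel G p)) [:0, of_int d:])"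

definition hermite_F :: "int \<Rightarrow> int poly \<Rightarrow> nat \<Rightarrow> complex poly" where
  "hermite_F d G p = (\<Sum>j\<le>degree (hermite_kernel G p) + p. (pderiv ^^ j) (hermite_f d G p))"

lemma map_poly_of_int_hermite_kernel:
  "map_poly (of_int :: int \<Rightarrow> 'a::comm_ring_1) (hermite_kernel G p) =
     monom 1 (p - 1) * map_poly of_int G ^ p"
  by (simp add: hermite_kernel_def map_poly_of_int_mult map_poly_of_int_power map_poly_monom)

lemma degree_hermite_f: "degree (hermite_f d G p) \<le> degree (hermite_kernel G p)"
proof -
  have "degree (hermite_f d G p) \<le>
      degree (pcompose (map_poly (of_int :: int \<Rightarrow> complex) (hermite_kernel G p)) [:0, of_int d:])"
    unfolding hermite_f_def by (rule degree_smult_le)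
  also have "\<dots> \<le> degree (map_poly (of_int :: int \<Rightarrow> complex) (hermite_kernel G p))"
    by (simp add: degree_pcompose)
  also have "\<dots> \<le> degree (hermite_kernel G p)" by (rule map_poly_degree_leq)
  finally show ?thesis .
qed

lemma pderiv_hermite_F: "pderiv (hermite_F d G p) = hermite_F d G p - hermite_f d G p"
  unfolding hermite_F_def
  by (rule pderiv_sum_higher_pderiv) (use degree_hermite_f[of d G p] in linarith)

lemma poly_hermite_f:
  "poly (hermite_f d G p) z =
     (of_int d * z) ^ (p - 1) * poly (map_poly of_int G) (of_int d * z) ^ p / fact (p - 1)"
  by (simp add: hermite_f_def poly_pcompose map_poly_of_int_hermite_kernel poly_monom poly_power
      mult.commute)

lemma poly_higher_pderiv_hermite_f:
  "poly ((pderiv ^^ j) (hermite_f d G p)) v = of_int d ^ j / fact (p - 1) *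
     poly ((pderiv ^^ j) (map_poly of_int (hermite_kernel G p))) (of_int d * v)"
  by (simp add: hermite_f_def higher_pderiv_smult higher_pderiv_pcompose_scale poly_pcompose
      mult.commute)

lemma norm_poly_hermite_f_le:
  fixes R :: real and z :: complex and d :: int
  assumes "cmod z \<le> R"
  defines "W \<equiv> \<bar>real_of_int d\<bar> * R"
  shows "cmod (poly (hermite_f d G p) z) \<le>
    ((1 + W) * ((\<Sum>i\<le>degree G. \<bar>real_of_int (coeff G i)\<bar>) * (1 + W) ^ degree G)) ^ p / fact (p - 1)"
proof -
  define B where "B = (\<Sum>i\<le>degree G. \<bar>real_of_int (coeff G i)\<bar>) * (1 + W) ^ degree G"
  have "R \<ge> 0" using assms(1) norm_ge_zero order_trans by blast
  then have W0: "W \<ge> 0" by (simp add: W_def)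
  have dz: "cmod (of_int d * z) \<le> W" unfolding W_def using assms(1)
    by (simp add: norm_mult mult_left_mono)
  have "cmod (of_int d * z) ^ (p - 1) \<le> (1 + W) ^ (p - 1)"
    using dz by (intro power_mono) auto
  also have "\<dots> \<le> (1 + W) ^ p" using W0 by (intro power_increasing) auto
  finally have "cmod (of_int d * z) ^ (p - 1) \<le> (1 + W) ^ p" .
  moreover have "cmod (poly (map_poly of_int G) (of_int d * z)) ^ p \<le> B ^ p"
    unfolding B_def using norm_poly_map_poly_of_int_le[OF dz] by (intro power_mono) auto
  ultimately have "cmod (of_int d * z) ^ (p - 1) * cmod (poly (map_poly of_int G) (of_int d * z)) ^ p
      / fact (p - 1) \<le> (1 + W) ^ p * B ^ p / fact (p - 1)"
    using W0 by (intro divide_right_mono mult_mono) auto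
  then show ?thesis
    by (simp add: poly_hermite_f norm_mult norm_power norm_divide B_def power_mult_distrib)
qed

lemma lin_ext_poly_higher_pderiv_int:
  fixes H :: "int poly"
  assumes "int_power_sums d \<Theta>"
  obtains z where "z \<in> \<int>"
    "lin_ext (\<lambda>v. poly ((pderiv ^^ j) (map_poly of_int H)) (of_int d * v)) \<Theta> = fact j * z"
proof
  show "(\<Sum>n\<le>degree H. of_nat ((n + j) choose j) * of_int (coeff H (n + j)) *
      lin_ext (\<lambda>v. (of_int d * v) ^ n) \<Theta>) \<in> \<int>"
    using assms unfolding int_power_sums_def by (intro Ints_sum Ints_mult) auto
qed (simp add: poly_higher_pderiv_map_poly_of_int lin_ext_fun_cmult lin_ext_fun_sum
    lin_ext_fun_multc mult.assoc)

lemma lin_ext_poly_hermite_F: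
  "lin_ext (poly (hermite_F d G p)) \<Theta> = (\<Sum>j\<le>degree (hermite_kernel G p) + p.
     of_int d ^ j / fact (p - 1) * lin_ext (\<lambda>v. poly ((pderiv ^^ j)
       (map_poly of_int (hermite_kernel G p))) (of_int d * v)) \<Theta>)"
  unfolding hermite_F_def poly_sum lin_ext_fun_sum poly_higher_pderiv_hermite_f
  by (intro sum.cong refl) (simp add: lin_ext_fun_cmult[symmetric])

lemma coeff_hermite_kernel:
  "j < p \<Longrightarrow> coeff (hermite_kernel G p) j = (if j = p - 1 then coeff G 0 ^ p else 0)"
  by (auto simp: hermite_kernel_def coeff_monom_mult coeff_0_power)

text \<open>Below order \<open>p\<close> the derivatives of the kernel vanish at the roots of \<open>G\<close>, leaving the term at \<open>0\<close>.\<close>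

lemma lin_ext_poly_higher_pderiv_hermite_kernel:
  assumes "j < p"
    and "\<And>v. v \<in> Poly_Mapping.keys \<Theta> \<Longrightarrow> v \<noteq> 0 \<Longrightarrow>
           poly (map_poly of_int G) (of_int d * v) = (0::complex)"
  shows "lin_ext (\<lambda>v. poly ((pderiv ^^ j) (map_poly of_int (hermite_kernel G p))) (of_int d * v)) \<Theta> =
    of_int (Poly_Mapping.lookup \<Theta> 0) * fact j * of_int (coeff (hermite_kernel G p) j)"
proof -
  let ?H = "map_poly (of_int :: int \<Rightarrow> complex) (hermite_kernel G p)"
  have "lin_ext (\<lambda>v. poly ((pderiv ^^ j) ?H) (of_int d * v)) \<Theta> =
      of_int (Poly_Mapping.lookup \<Theta> 0) * poly ((pderiv ^^ j) ?H) (of_int d * 0)"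
  proof (rule lin_ext_at_zero)
    fix v assume v: "v \<in> Poly_Mapping.keys \<Theta>" "v \<noteq> 0"
    have "[:-(of_int d * v),1:] dvd map_poly of_int G"
      using assms(2)[OF v] by (simp add: poly_eq_0_iff_dvd)
    then have "[:-(of_int d * v),1:] ^ p dvd ?H"
      unfolding map_poly_of_int_hermite_kernel by (intro dvd_mult dvd_power_same)
    then show "poly ((pderiv ^^ j) ?H) (of_int d * v) = 0"
      using assms(1) by (rule poly_higher_pderiv_eq_0_at_multiple_root)
  qed
  then show ?thesis
    by (simp add: poly_0_coeff_0 coeff_higher_pderiv pochhammer_fact coeff_map_poly)
qed

lemma fact_div_fact_pred_eq:
  assumes "1 \<le> p" "p \<le> j"
  shows "(fact j :: 'a::field_char_0) / fact (p - 1) = of_nat p * of_nat (fact j div fact p)"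
proof -
  have "fact p dvd (fact j :: nat)" using assms(2) by (rule fact_dvd)
  then have "(fact j :: 'a) = of_nat (fact j div fact p) * fact p"
    by (metis dvd_div_mult_self of_nat_fact of_nat_mult)
  moreover have "(fact p :: 'a) = of_nat p * fact (p - 1)"
    using assms(1) by (metis Suc_diff_1 fact_Suc less_le_trans zero_less_one of_nat_fact of_nat_mult)
  ultimately show ?thesis by (simp add: field_simps)
qed

text \<open>The derivatives of order \<open>j \<ge> p\<close> contribute \<open>p\<close> times an integer, as \<open>j! / (p-1)! = p \<cdot> j! / p!\<close>.\<close>

lemma lin_ext_hermite_F_eq:
  assumes "int_power_sums d \<Theta>" and "p \<ge> 1"
    and "\<And>v. v \<in> Poly_Mapping.keys \<Theta> \<Longrightarrow> v \<noteq> 0 \<Longrightarrow>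
           poly (map_poly of_int G) (of_int d * v) = (0::complex)"
  obtains W :: int where "lin_ext (poly (hermite_F d G p)) \<Theta> =
    of_int (Poly_Mapping.lookup \<Theta> 0 * d ^ (p - 1) * coeff G 0 ^ p + int p * W)"
proof -
  define N where "N = degree (hermite_kernel G p) + p"
  define L where "L j = lin_ext (\<lambda>v. poly ((pderiv ^^ j)
    (map_poly of_int (hermite_kernel G p))) (of_int d * v)) \<Theta>" for j
  define \<Theta>0 where "\<Theta>0 = Poly_Mapping.lookup \<Theta> 0"
  have lin_ext_F: "lin_ext (poly (hermite_F d G p)) \<Theta> = (\<Sum>j\<le>N. of_int d ^ j / fact (p - 1) * L j)"
    unfolding lin_ext_poly_hermite_F N_def L_def ..
  have low: "(\<Sum>j<p. of_int d ^ j / fact (p - 1) * L j) = of_int (\<Theta>0 * d ^ (p - 1) * coeff G 0 ^ p)"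
  proof -
    have "(\<Sum>j<p. of_int d ^ j / fact (p - 1) * L j) =
          (\<Sum>j<p. if j = p - 1 then (of_int (\<Theta>0 * d ^ (p - 1) * coeff G 0 ^ p) :: complex) else 0)"
      by (intro sum.cong refl)
        (auto simp: L_def \<Theta>0_def lin_ext_poly_higher_pderiv_hermite_kernel[OF _ assms(3)]
          coeff_hermite_kernel)
    also have "\<dots> = of_int (\<Theta>0 * d ^ (p - 1) * coeff G 0 ^ p)"
      using assms(2) by (simp add: sum.delta)
    finally show ?thesis .
  qed
  have "\<exists>z. z \<in> \<int> \<and> L j = fact j * z" for j
    using lin_ext_poly_higher_pderiv_int[OF assms(1)] unfolding L_def by blast
  then obtain Z where Z: "\<And>j. Z j \<in> \<int>" "\<And>j. L j = fact j * Z j"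
    by metis
  have high: "(\<Sum>j\<in>{p..N}. of_int d ^ j / fact (p - 1) * L j) =
            of_nat p * (\<Sum>j\<in>{p..N}. of_int d ^ j * of_nat (fact j div fact p) * Z j)"
    unfolding sum_distrib_left
  proof (intro sum.cong refl)
    fix j assume "j \<in> {p..N}"
    have "of_int d ^ j / fact (p - 1) * L j = of_int d ^ j * Z j * (fact j / fact (p - 1))"
      by (simp add: Z(2))
    also have "\<dots> = of_nat p * (of_int d ^ j * of_nat (fact j div fact p) * Z j)"
      using assms(2) \<open>j \<in> {p..N}\<close> by (subst fact_div_fact_pred_eq) (auto simp: mult_ac)
    finally show "of_int d ^ j / fact (p - 1) * L j =
        of_nat p * (of_int d ^ j * of_nat (fact j div fact p) * Z j)" .
  qed
  have "(\<Sum>j\<in>{p..N}. of_int d ^ j * of_nat (fact j div fact p) * Z j) \<in> \<int>"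
    using Z(1) by (intro Ints_sum Ints_mult) auto
  then obtain W where W: "(\<Sum>j\<in>{p..N}. of_int d ^ j * of_nat (fact j div fact p) * Z j) = of_int W"
    by (elim Ints_cases)
  have split: "{..N} = {..<p} \<union> {p..N}" by (auto simp: N_def)
  have "lin_ext (poly (hermite_F d G p)) \<Theta> = (\<Sum>j<p. of_int d ^ j / fact (p - 1) * L j) +
          (\<Sum>j\<in>{p..N}. of_int d ^ j / fact (p - 1) * L j)"
    unfolding lin_ext_F split by (subst sum.union_disjoint) auto
  also have "\<dots> = of_int (\<Theta>0 * d ^ (p - 1) * coeff G 0 ^ p + int p * W)"
    unfolding low high W by simp
  finally show thesis unfolding \<Theta>0_def by (rule that)
qed

lemma norm_lin_ext_hermite_F_le:
  assumes "lin_ext exp \<Theta> = 0"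
  obtains A C where "\<And>p. cmod (lin_ext (poly (hermite_F d G p)) \<Theta>) \<le> A * C ^ p / fact (p - 1)"
proof
  define R where "R = (\<Sum>v\<in>Poly_Mapping.keys \<Theta>. cmod v)"
  define W where "W = \<bar>real_of_int d\<bar> * R"
  define C where "C = (1 + W) * ((\<Sum>i\<le>degree G. \<bar>real_of_int (coeff G i)\<bar>) * (1 + W) ^ degree G)"
  fix p
  let ?F = "poly (hermite_F d G p)"
  \<comment> \<open>Subtracting \<open>F(0) \<cdot> \<Sum> \<Theta>\<^sub>v e\<^sup>v = 0\<close> turns the sum into one of small differences.\<close>
  have "lin_ext ?F \<Theta> = - lin_ext (\<lambda>v. exp v * ?F 0 - ?F v) \<Theta>"
    by (simp add: lin_ext_fun_diff lin_ext_fun_multc assms)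
  then have "cmod (lin_ext ?F \<Theta>) = cmod (lin_ext (\<lambda>v. exp v * ?F 0 - ?F v) \<Theta>)" by simp
  also have "\<dots> \<le> (\<Sum>v\<in>Poly_Mapping.keys \<Theta>. \<bar>real_of_int (Poly_Mapping.lookup \<Theta> v)\<bar>) *
      (exp R * exp R * (C ^ p / fact (p - 1)) * R)"
  proof (rule norm_lin_ext_le)
    fix v assume "v \<in> Poly_Mapping.keys \<Theta>"
    then have "cmod v \<le> R" unfolding R_def by (intro member_le_sum) auto
    then show "cmod (exp v * ?F 0 - ?F v) \<le> exp R * exp R * (C ^ p / fact (p - 1)) * R"
      using norm_poly_hermite_f_le[of _ R d G p]
      by (intro norm_exp_mult_poly_diff_le[OF pderiv_hermite_F]) (auto simp: C_def W_def)
  qed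
  finally show "cmod (lin_ext ?F \<Theta>) \<le> ((\<Sum>v\<in>Poly_Mapping.keys \<Theta>.
      \<bar>real_of_int (Poly_Mapping.lookup \<Theta> v)\<bar>) * (exp R * exp R * R)) * C ^ p / fact (p - 1)"
    by (simp add: mult_ac)
qed

lemma lin_ext_hermite_F_tendsto_0:
  assumes "lin_ext exp \<Theta> = 0"
  shows "eventually (\<lambda>p. cmod (lin_ext (poly (hermite_F d G p)) \<Theta>) < 1) sequentially"
proof -
  obtain A C where bound: "\<And>p. cmod (lin_ext (poly (hermite_F d G p)) \<Theta>) \<le> A * C ^ p / fact (p - 1)"
    using norm_lin_ext_hermite_F_le[OF assms] by blast
  have "(\<lambda>n. (A * C) * (inverse (fact n) * C ^ n)) \<longlonglongrightarrow> 0"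
    using tendsto_mult[OF tendsto_const summable_LIMSEQ_zero[OF summable_exp], of "A * C" C]
    by simp
  then have "eventually (\<lambda>n. (A * C) * (inverse (fact n) * C ^ n) < 1) sequentially"
    by (rule order_tendstoD) simp
  then obtain P0 where P0: "\<And>n. n \<ge> P0 \<Longrightarrow> (A * C) * (inverse (fact n) * C ^ n) < 1"
    by (auto simp: eventually_sequentially)
  show ?thesis
  proof (rule eventually_sequentiallyI[of "Suc P0"])
    fix p assume p: "p \<ge> Suc P0"
    then have "A * C ^ p / fact (p - 1) = (A * C) * (inverse (fact (p - 1)) * C ^ (p - 1))"
      by (cases p) (auto simp: field_simps)
    also have "\<dots> < 1" using P0[of "p - 1"] p by simp
    finally show "cmod (lin_ext (poly (hermite_F d G p)) \<Theta>) < 1"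
      using bound[of p] by linarith
  qed
qed

lemma no_exp_relation_with_int_power_sums:
  fixes \<Theta> :: group_ring and d :: int and G :: "int poly"
  assumes "lin_ext exp \<Theta> = 0" and "Poly_Mapping.lookup \<Theta> 0 \<noteq> 0" and "int_power_sums d \<Theta>"
    and "d \<noteq> 0" and "coeff G 0 \<noteq> 0"
    and G_root: "\<And>v. v \<in> Poly_Mapping.keys \<Theta> \<Longrightarrow> v \<noteq> 0 \<Longrightarrow>
                  poly (map_poly of_int G) (of_int d * v) = (0::complex)"
  shows False
proof -
  define \<Theta>0 where "\<Theta>0 = Poly_Mapping.lookup \<Theta> 0"
  obtain P0 where P0: "\<And>p. p \<ge> P0 \<Longrightarrow> cmod (lin_ext (poly (hermite_F d G p)) \<Theta>) < 1"
    using lin_ext_hermite_F_tendsto_0[OF assms(1), where d=d and G=G] by (auto simp: eventually_sequentially)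
  obtain p :: nat where p: "prime p" "p > P0 + nat \<bar>\<Theta>0\<bar> + nat \<bar>d\<bar> + nat \<bar>coeff G 0\<bar>"
    using bigger_prime by blast
  have "p \<ge> 1" using p(1) prime_ge_1_nat by blast
  then obtain W where W: "lin_ext (poly (hermite_F d G p)) \<Theta> =
      of_int (\<Theta>0 * d ^ (p - 1) * coeff G 0 ^ p + int p * W)"
    using lin_ext_hermite_F_eq[OF assms(3) _ G_root] unfolding \<Theta>0_def by blast
  define X where "X = \<Theta>0 * d ^ (p - 1) * coeff G 0 ^ p + int p * W"
  have "cmod (of_int X :: complex) < 1"
    using P0[of p] p(2) unfolding W X_def by simp
  then have "\<bar>real_of_int X\<bar> < 1" by (metis norm_of_int)
  then have "X = 0" by linarith
  then have "int p dvd \<Theta>0 * d ^ (p - 1) * coeff G 0 ^ p"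
    unfolding X_def by (metis add.commute add_eq_0_iff dvd_minus_iff dvd_triv_left)
  moreover have "prime (int p)" using p(1) by simp
  ultimately have "int p dvd \<Theta>0 \<or> int p dvd d \<or> int p dvd coeff G 0"
    using prime_dvd_power[of "int p" d "p - 1"] prime_dvd_power[of "int p" "coeff G 0" p]
    by (auto simp: prime_dvd_mult_iff)
  moreover have "\<not> int p dvd x" if "x \<noteq> 0" "nat \<bar>x\<bar> < p" for x
    using dvd_imp_le_int[OF that(1)] that(2) by fastforce
  ultimately show False using p(2) assms(2,4,5) unfolding \<Theta>0_def by force
qed

section \<open>The Hermite--Lindemann theorem\<close>

lemma int_poly_roots_scaled_int_psums:
  fixes P :: "int poly"
  assumes "P \<noteq> 0"
  obtains xs where "\<And>z :: complex. poly (map_poly of_int P) z = of_int (lead_coeff P) * (\<Prod>x\<leftarrow>xs. z - x)"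
    and "\<And>e. psum e (map (\<lambda>a. of_int (lead_coeff P) * a) xs) \<in> \<int>"
proof -
  define Pc :: "complex poly" where "Pc = map_poly of_int P"
  define d where "d = lead_coeff P"
  obtain xs where xs: "Pc = smult (lead_coeff Pc) (\<Prod>x\<leftarrow>xs. [:-x,1:])"
    using complex_poly_linear_factors by blast
  have lead_Pc: "lead_coeff Pc = of_int d"
    by (simp add: Pc_def d_def degree_map_poly coeff_map_poly)
  have "esym k (map (\<lambda>a. of_int d * a) xs) \<in> \<int>" for k
  proof (cases "k \<le> length xs")
    case True
    show ?thesis
    proof (cases k)
      case (Suc k')
      have "coeff Pc (length xs - k) = of_int d * ((-1)^k * esym k xs)"
        by (subst xs) (simp add: coeff_prod_linear True lead_Pc)
      then have "of_int d ^ k * esym k xs = (-1)^k * of_int d ^ k' * coeff Pc (length xs - k)"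
        using Suc by (simp add: algebra_simps)
      moreover have "coeff Pc (length xs - k) \<in> \<int>" by (simp add: Pc_def coeff_map_poly)
      ultimately have "of_int d ^ k * esym k xs \<in> \<int>" by simp
      then show ?thesis by (simp add: esym_map_mult[of k "of_int d" xs, simplified o_def])
    qed simp
  qed (simp add: esym_eq_0)
  then have "psum e (map (\<lambda>a. of_int d * a) xs) \<in> \<int>" for e
    by (intro Ints_subring.psum_mem_if_esym_mem)
  moreover have "poly (map_poly of_int P) z = of_int d * (\<Prod>x\<leftarrow>xs. z - x)" for z
    by (subst Pc_def[symmetric], subst xs) (simp add: lead_Pc poly_prod_linear)
  ultimately show thesis unfolding d_def using that by blast
qed

lemma int_poly_vanishing_on_algebraic_set:
  fixes S :: "complex set"
  assumes "finite S" and "\<And>v. v \<in> S \<Longrightarrow> algebraic v \<and> v \<noteq> 0"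
  obtains G :: "int poly" where "coeff G 0 \<noteq> 0" "\<And>v. v \<in> S \<Longrightarrow> poly (map_poly of_int G) v = 0"
proof -
  have ex: "\<forall>v\<in>S. \<exists>q :: int poly. coeff q 0 \<noteq> 0 \<and> poly (map_poly of_int q) v = 0"
  proof
    fix v assume "v \<in> S"
    then show "\<exists>q :: int poly. coeff q 0 \<noteq> 0 \<and> poly (map_poly of_int q) v = 0"
      using algebraicE'_nonzero[of v] assms(2) by blast
  qed
  obtain g :: "complex \<Rightarrow> int poly"
    where g: "\<forall>v\<in>S. coeff (g v) 0 \<noteq> 0 \<and> poly (map_poly of_int (g v)) v = 0"
    using bchoice[OF ex] by blast
  show thesis
  proof (rule that[of "\<Prod>v\<in>S. g v"])
    show "coeff (\<Prod>v\<in>S. g v) 0 \<noteq> 0"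
      unfolding poly_0_coeff_0[symmetric] poly_prod using g assms(1)
      by (auto simp: poly_0_coeff_0)
    show "poly (map_poly of_int (\<Prod>v\<in>S. g v)) v = 0" if "v \<in> S" for v
      unfolding map_poly_of_int_prod poly_prod
      using g that assms(1) by (auto intro!: prod_zero)
  qed
qed

theorem hermite_lindemann:
  fixes \<alpha> :: complex
  assumes "algebraic \<alpha>" and "\<alpha> \<noteq> 0"
  shows "\<not> algebraic (exp \<alpha>)"
proof
  assume "algebraic (exp \<alpha>)"
  then obtain M :: "int poly" where M: "M \<noteq> 0" "poly (map_poly of_int M) (exp \<alpha>) = 0"
    by (elim algebraicE')
  obtain P :: "int poly" where P: "P \<noteq> 0" "coeff P 0 \<noteq> 0" "poly (map_poly of_int P) \<alpha> = 0"
    using algebraicE'_nonzero[OF assms] by blast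
  define d where "d = lead_coeff P"
  have "d \<noteq> 0" using P(1) by (simp add: d_def)
  obtain as where as: "\<And>z :: complex. poly (map_poly of_int P) z = of_int d * (\<Prod>x\<leftarrow>as. z - x)"
    and psums: "\<And>e. psum e (map (\<lambda>a. of_int d * a) as) \<in> \<int>"
    using int_poly_roots_scaled_int_psums[OF P(1)] unfolding d_def by blast
  have roots: "a \<in> set as \<longleftrightarrow> poly (map_poly of_int P) a = (0::complex)" for a
    using as[of a] \<open>d \<noteq> 0\<close> by (auto simp: prod_list_zero_iff)
  have "0 \<notin> set as"
    using roots P(2) by (simp add: poly_0_coeff_0 coeff_map_poly)
  moreover have "\<forall>a\<in>set as. algebraic a"
    using roots P(1) by (auto intro!: algebraicI[of "map_poly of_int P"] simp: coeff_map_poly map_poly_eq_0_iff)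
  moreover have "\<alpha> \<in> set as" using roots P(3) by simp
  ultimately obtain \<Theta> where \<Theta>: "lin_ext exp \<Theta> = 0" "Poly_Mapping.lookup \<Theta> 0 \<noteq> 0"
    "int_power_sums d \<Theta>" "algebraic_support \<Theta>"
    using exp_relation_in_group_ring[OF M(1) \<open>\<alpha> \<in> set as\<close> M(2) \<open>0 \<notin> set as\<close> _ psums]
    by blast
  have "finite ((\<lambda>v. of_int d * v) ` (Poly_Mapping.keys \<Theta> - {0}))" by simp
  moreover have "algebraic w \<and> w \<noteq> 0" if "w \<in> (\<lambda>v. of_int d * v) ` (Poly_Mapping.keys \<Theta> - {0})" for w
    using that \<Theta>(4) \<open>d \<noteq> 0\<close> by (auto simp: algebraic_support_def intro!: algebraic_mult_complex)
  ultimately obtain G :: "int poly" where "coeff G 0 \<noteq> 0"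
    "\<And>v. v \<in> Poly_Mapping.keys \<Theta> \<Longrightarrow> v \<noteq> 0 \<Longrightarrow> poly (map_poly of_int G) (of_int d * v) = (0::complex)"
    by (rule int_poly_vanishing_on_algebraic_set) auto
  then show False
    using no_exp_relation_with_int_power_sums[OF \<Theta>(1-3) \<open>d \<noteq> 0\<close>] by blast
qed

lemma algebraic_root_of_unity:
  fixes z :: complex
  assumes "z ^ N = 1" "N > 0"
  shows "algebraic z"
proof (rule algebraicI[of "monom 1 N - 1"])
  show "(monom 1 N - 1 :: complex poly) \<noteq> 0"
  proof
    assume "(monom 1 N - 1 :: complex poly) = 0"
    then have "coeff (monom 1 N - 1 :: complex poly) N = 0" by simp
    then show False using assms(2) by (simp add: coeff_1)
  qed
qed (use assms(1) in \<open>auto simp: coeff_monom coeff_1 poly_monom\<close>)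

lemma algebraic_sin_rat_pi:
  fixes y :: real
  assumes "y \<in> \<rat>"
  shows "algebraic (sin (pi * y))"
proof -
  obtain a b where ab: "b > 0" "y = of_int a / of_int b" using Rats_cases'[OF assms] by blast
  define \<zeta> where "\<zeta> = exp (\<i> * of_real (pi * y))"
  have "of_int b * (of_real y :: complex) = of_int a"
  proof -
    have "y * of_int b = of_int a" using ab by simp
    then have "complex_of_real (y * of_int b) = complex_of_real (of_int a)" by simp
    then show ?thesis by (simp add: mult.commute)
  qed
  then have "of_nat (nat (2 * b)) * (\<i> * of_real (pi * y)) = (2 * of_int a * pi) * \<i>"
    using ab(1) by (simp add: mult_ac)
  then have "\<zeta> ^ nat (2 * b) = 1"
    unfolding \<zeta>_def exp_of_nat_mult[symmetric] by (simp only: exp_integer_2pi Ints_of_int)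
  then have "algebraic \<zeta>" using ab by (intro algebraic_root_of_unity) auto
  have "complex_of_real (sin (pi * y)) = (\<zeta> - inverse \<zeta>) * inverse (2 * \<i>)"
  proof -
    have "complex_of_real (sin (pi * y)) = sin (complex_of_real (pi * y))" by (simp only: sin_of_real)
    also have "\<dots> = (\<zeta> - exp (- (\<i> * complex_of_real (pi * y)))) / (2 * \<i>)"
      unfolding sin_exp_eq \<zeta>_def ..
    also have "exp (- (\<i> * complex_of_real (pi * y))) = inverse \<zeta>"
      unfolding \<zeta>_def by (rule exp_minus)
    finally show ?thesis by (simp only: divide_inverse)
  qed
  also have "algebraic \<dots>"
  proof -
    have "algebraic (\<zeta> + - inverse \<zeta>)"
      using \<open>algebraic \<zeta>\<close> by (intro algebraic_add_complex algebraic_minus algebraic_inverse)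
    moreover have "algebraic (2 * \<i>)"
      by (intro algebraic_mult_complex rat_imp_algebraic algebraic_ii) simp
    ultimately show ?thesis
      by (simp only: diff_conv_add_uminus algebraic_mult_complex algebraic_inverse)
  qed
  finally show ?thesis by simp
qed

lemma Gamma_reflection_real:
  fixes y :: real
  shows "Gamma y * Gamma (1 - y) = pi / sin (pi * y)"
proof -
  have "Gamma (1 - complex_of_real y) = complex_of_real (Gamma (1 - y))"
    using Gamma_complex_of_real[of "1 - y"] by simp
  then have "complex_of_real (Gamma y * Gamma (1 - y)) = Gamma (of_real y) * Gamma (1 - of_real y)"
    by (simp only: Gamma_complex_of_real of_real_mult)
  also have "\<dots> = of_real pi / sin (of_real pi * of_real y)" by (rule Gamma_reflection_complex)
  also have "\<dots> = complex_of_real (pi / sin (pi * y))"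
    by (simp add: sin_of_real flip: of_real_mult)
  finally show ?thesis by (simp only: of_real_eq_iff)
qed

theorem mainTheorem5:
  fixes y :: real
  assumes "y \<in> \<rat>" and "0 < y" and "y < 1"
    and "algebraic (ln (Gamma y) + ln (Gamma (1 - y)))"
  shows "\<not> algebraic (pi * exp 1)"
proof
  assume alg_pi_e: "algebraic (pi * exp 1)"
  define a where "a = ln (Gamma y) + ln (Gamma (1 - y))"
  define s where "s = sin (pi * y)"
  have "0 < s" "s \<le> 1" unfolding s_def using assms(2,3) by (auto intro: sin_gt_zero)
  have exp_a: "exp a = pi / s"
    using assms(2,3) Gamma_reflection_real[of y] by (simp add: a_def s_def exp_add)
  then have "exp a \<ge> pi" using \<open>0 < s\<close> \<open>s \<le> 1\<close> by (simp add: le_divide_eq)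
  then have "0 < a" using pi_gt3 one_less_exp_iff[of a] by linarith
  have "exp (a + 1) = (pi * exp 1) * inverse s"
    using \<open>0 < s\<close> by (simp add: exp_add exp_a divide_inverse)
  moreover have "algebraic s" unfolding s_def by (rule algebraic_sin_rat_pi[OF assms(1)])
  ultimately have "algebraic (exp (a + 1))"
    using algebraic_mult_real[OF alg_pi_e algebraic_inverse] by simp
  then have "algebraic (exp (complex_of_real (a + 1)))"
    by (simp only: exp_of_real algebraic_of_real_iff)
  moreover have "algebraic (complex_of_real (a + 1))"
    using algebraic_add_real[OF assms(4) rat_imp_algebraic[of 1]]
    by (simp only: a_def algebraic_of_real_iff Rats_1 simp_thms)
  moreover have "complex_of_real (a + 1) \<noteq> 0"
    unfolding of_real_eq_0_iff using \<open>0 < a\<close> by linarith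
  ultimately show False using hermite_lindemann by blast
qed

end
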